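(* Let $\Phi\in\Lambda$, let $n<N$, and let $\Xi$ be the set of designs $\{(\boldsymbol{x}_i,w_i)\}$ with $0\le w_i\le1/n$ and $\sum_iw_i=1$. Let $\xi=\{(\boldsymbol{x}_i,w_i)\}\in\Xi$ with $\Phi(\xi)<\infty$, and let $\mathcal{X}_1=\{\boldsymbol{x}_i:w_i=0\}$, $\mathcal{X}_3=\{\boldsymbol{x}_i:w_i=1/n\}$, $\mathcal{X}_2=\{\boldsymbol{x}_i:0<w_i<1/n\}$. Assume that if $\mathcal{X}_2\ne\emptyset$ then $F_\Phi(\xi;\boldsymbol{x}_i)=s$ for a common value $s$ for all $\boldsymbol{x}_i\in\mathcal{X}_2$. Let $\boldsymbol{x}_{1*}\in\arg\min_{\boldsymbol{x}_i\in\mathcal{X}_1}F_\Phi(\xi;\boldsymbol{x}_i)$ and $\boldsymbol{x}_{3*}\in\arg\max_{\boldsymbol{x}_i\in\mathcal{X}_3}F_\Phi(\xi;\boldsymbol{x}_i)$ (when the respective sets are nonempty). Suppose there exist $\xi_0\in\Xi$ and $\delta>0$ with $\Phi(\xi)-\Phi(\xi_0)>\delta$. Then: (a) if $\mathcal{X}_2=\emptyset$, then $F_\Phi(\xi;\boldsymbol{x}_{1*})-F_\Phi(\xi;\boldsymbol{x}_{3*})\le-\delta$; (b) if $\mathcal{X}_2\ne\emptyset$ and $\mathcal{X}_1=\emptyset$, then $\mathcal{X}_3\neq\emptyset$ and $F_\Phi(\xi;\boldsymbol{x}_{3*})-s\ge\delta$; (c) if $\mathcal{X}_2\ne\emptyset$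 and $\mathcal{X}_3=\emptyset$, then $\mathcal{X}_1\neq\emptyset$ and $F_\Phi(\xi;\boldsymbol{x}_{1*})-s\le-\delta$; (d) if $\mathcal{X}_1,\mathcal{X}_2,\mathcal{X}_3$ are all nonempty, then $F_\Phi(\xi;\boldsymbol{x}_{1*})-s\le-\delta/2$ or $F_\Phi(\xi;\boldsymbol{x}_{3*})-s\ge\delta/2$.
   Context: Designs $\xi=\{(\boldsymbol{x}_i,w_i)\}$ on $\mathcal{X}=\{\boldsymbol{x}_1,\ldots,\boldsymbol{x}_N\}$, $w_i\ge0$, $\sum w_i=1$; $M(\xi)=\sum_iw_iI_{\boldsymbol\theta}(\boldsymbol{x}_i)$ with symmetric PSD $I_{\boldsymbol\theta}(\boldsymbol{x}_i)$; $\Phi(\xi)$ is a criterion of $M(\xi)$ ($+\infty$ when undefined). $F_\Phi(\xi,\eta)=\lim_{\alpha\downarrow0}[\Phi((1-\alpha)\xi+\alpha\eta)-\Phi(\xi)]/\alpha$; $F_\Phi(\xi;\boldsymbol{x}_i)=F_\Phi(\xi,\delta_{\boldsymbol{x}_i})$ with $\delta_{\boldsymbol{x}_i}$ the one-point design at $\boldsymbol{x}_i$. $\Lambda$: criteria convex in the weights, linearly differentiable ($F_\Phi(\xi,\eta)=\sum_i\lambda_iF_\Phi(\xi;\boldsymbol{x}_i)$ for $\eta=\{(\boldsymbol{x}_i,\lambda_i)\}$ whenever $\Phi(\xi)<\infty$), and infinitely differentiable along line segments of designs. *)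

theory Defs
  imports "HOL-Analysis.Analysis"
begin

text \<open>Design points are indexed by a finite type 'n (so N = CARD('n)); a design is
  its weight vector w :: 'n \<Rightarrow> real.  Criteria take values in ereal (+\<infinity> when undefined).\<close>

definition is_design :: "('n::finite \<Rightarrow> real) \<Rightarrow> bool" where
  "is_design w \<longleftrightarrow> (\<forall>i. 0 \<le> w i) \<and> (\<Sum>i\<in>UNIV. w i) = 1"

definition bounded_design :: "nat \<Rightarrow> ('n::finite \<Rightarrow> real) \<Rightarrow> bool" where
  "bounded_design n w \<longleftrightarrow> is_design w \<and> (\<forall>i. w i \<le> 1 / real n)"

definition point_design :: "'n::finite \<Rightarrow> 'n \<Rightarrow> real" where
  "point_design i = (\<lambda>j. if j = i then 1 else 0)"

definition mix :: "real \<Rightarrow> ('n \<Rightarrow> real) \<Rightarrow> ('n \<Rightarrow> real) \<Rightarrow> ('n \<Rightarrow> real)" where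
  "mix \<alpha> w v = (\<lambda>i. (1 - \<alpha>) * w i + \<alpha> * v i)"

definition criterion_of ::
  "(('n::finite \<Rightarrow> real) \<Rightarrow> ereal) \<Rightarrow> ('n \<Rightarrow> real^'p^'p) \<Rightarrow> (real^'p^'p \<Rightarrow> ereal) \<Rightarrow> bool" where
  "criterion_of Phi I phi \<longleftrightarrow>
     (\<forall>i. transpose (I i) = I i \<and> (\<forall>x. 0 \<le> x \<bullet> (I i *v x))) \<and>
     (\<forall>w. Phi w = phi (\<Sum>i\<in>UNIV. w i *\<^sub>R I i)) \<and>
     (\<forall>w. Phi w \<noteq> -\<infinity>)"

definition has_dir_deriv ::
  "(('n \<Rightarrow> real) \<Rightarrow> ereal) \<Rightarrow> ('n \<Rightarrow> real) \<Rightarrow> ('n \<Rightarrow> real) \<Rightarrow> real \<Rightarrow> bool" where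
  "has_dir_deriv Phi w v d \<longleftrightarrow>
     ((\<lambda>\<alpha>. (Phi (mix \<alpha> w v) - Phi w) / ereal \<alpha>) \<longlongrightarrow> ereal d) (at_right 0)"

definition FPhi :: "(('n \<Rightarrow> real) \<Rightarrow> ereal) \<Rightarrow> ('n \<Rightarrow> real) \<Rightarrow> ('n \<Rightarrow> real) \<Rightarrow> real" where
  "FPhi Phi w v = (THE d. has_dir_deriv Phi w v d)"

definition FPhi_pt :: "(('n::finite \<Rightarrow> real) \<Rightarrow> ereal) \<Rightarrow> ('n \<Rightarrow> real) \<Rightarrow> 'n \<Rightarrow> real" where
  "FPhi_pt Phi w i = FPhi Phi w (point_design i)"

definition in_Lambda :: "(('n::finite \<Rightarrow> real) \<Rightarrow> ereal) \<Rightarrow> bool" where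
  "in_Lambda Phi \<longleftrightarrow>
     \<comment> \<open>convex in the weights\<close>
     (\<forall>w v \<alpha>. is_design w \<and> is_design v \<and> 0 \<le> \<alpha> \<and> \<alpha> \<le> 1 \<longrightarrow>
        Phi (mix \<alpha> w v) \<le> ereal (1 - \<alpha>) * Phi w + ereal \<alpha> * Phi v) \<and>
     \<comment> \<open>linearly differentiable\<close>
     (\<forall>w. is_design w \<and> Phi w < \<infinity> \<longrightarrow>
        (\<forall>i. \<exists>d. has_dir_deriv Phi w (point_design i) d) \<and>
        (\<forall>v. is_design v \<longrightarrow>
           has_dir_deriv Phi w v (\<Sum>i\<in>UNIV. v i * FPhi_pt Phi w i))) \<and>
     \<comment> \<open>infinitely differentiable along line segments of designs\<close>
     (\<forall>w v. is_design w \<and> is_design v \<and> Phi w < \<infinity> \<and> Phi v < \<infinity> \<longrightarrow>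
        (\<exists>D :: nat \<Rightarrow> real \<Rightarrow> real.
           (\<forall>\<alpha>\<in>{0..1}. D 0 \<alpha> = real_of_ereal (Phi (mix \<alpha> w v))) \<and>
           (\<forall>k. \<forall>\<alpha>\<in>{0..1}. (D k has_real_derivative D (Suc k) \<alpha>) (at \<alpha> within {0..1}))))"

end

theory Submission
  imports Defs
begin

text \<open>By convexity, the directional derivative of \<open>Phi\<close> at \<open>\<xi>\<close> towards \<open>\<xi>\<^sub>0\<close> is at most
  \<open>Phi(\<xi>\<^sub>0) - Phi(\<xi>)\<close>, which is below \<open>-\<delta>\<close>; by linear differentiability (and since the derivative
  towards \<open>\<xi>\<close> itself vanishes) it equals \<open>\<Sum>\<^sub>i (w0\<^sub>i - w\<^sub>i) F(\<xi>; x\<^sub>i)\<close>. As the weights sum to one, \<open>F\<close>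
  may be shifted by the common value \<open>s\<close> on \<open>X\<^sub>2\<close>, which then drops out. Passing from \<open>\<xi>\<close> to
  \<open>\<xi>\<^sub>0\<close> can only add some mass \<open>P\<close> on \<open>X\<^sub>1\<close> and only remove some mass \<open>R\<close> from \<open>X\<^sub>3\<close>, with
  \<open>P, R \<in> [0,1]\<close>, so the sum is at least \<open>(F(x\<^sub>1\<^sub>*) - s) P - (F(x\<^sub>3\<^sub>*) - s) R\<close>. Each of the four
  cases is read off this bound.\<close>

lemma has_dir_deriv_self_eq_0:
  assumes "has_dir_deriv Phi w w d" and "Phi w = ereal a"
  shows "d = 0"
proof -
  have "mix \<alpha> w w = w" for \<alpha>
    by (rule ext) (simp add: mix_def algebra_simps)
  then have "((\<lambda>\<alpha>. 0) \<longlongrightarrow> ereal d) (at_right (0::real))"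
    using assms by (simp add: has_dir_deriv_def)
  then have "ereal d = 0"
    using tendsto_unique[OF trivial_limit_at_right_real _ tendsto_const] by blast
  then show "d = 0"
    by (simp add: zero_ereal_def)
qed

lemma has_dir_deriv_le_of_convex:
  assumes deriv: "has_dir_deriv Phi w v d"
    and w: "Phi w = ereal a" and v: "Phi v \<le> ereal b"
    and convex: "\<And>\<alpha>. 0 < \<alpha> \<Longrightarrow> \<alpha> < 1 \<Longrightarrow>
      Phi (mix \<alpha> w v) \<le> ereal (1 - \<alpha>) * Phi w + ereal \<alpha> * Phi v"
  shows "d \<le> b - a"
proof -
  have quotient_le: "(Phi (mix \<alpha> w v) - Phi w) / ereal \<alpha> \<le> ereal (b - a)"
    if \<alpha>: "0 < \<alpha>" "\<alpha> < 1" for \<alpha>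
  proof -
    have "Phi (mix \<alpha> w v) \<le> ereal (1 - \<alpha>) * ereal a + ereal \<alpha> * Phi v"
      using convex[OF \<alpha>] w by simp
    also have "\<dots> \<le> ereal (1 - \<alpha>) * ereal a + ereal \<alpha> * ereal b"
      using \<alpha> v by (intro add_left_mono ereal_mult_left_mono) auto
    finally have chord: "Phi (mix \<alpha> w v) \<le> ereal ((1 - \<alpha>) * a + \<alpha> * b)"
      by simp
    show ?thesis
    proof (cases "Phi (mix \<alpha> w v)")
      case (real m)
      then have "m - a \<le> (b - a) * \<alpha>"
        using chord by (simp add: algebra_simps)
      then show ?thesis
        using \<alpha> real w by (simp add: pos_divide_le_eq)
    qed (use chord w \<alpha> in auto)
  qed
  have "eventually (\<lambda>\<alpha>. (Phi (mix \<alpha> w v) - Phi w) / ereal \<alpha> \<le> ereal (b - a)) (at_right 0)"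
    by (rule eventually_at_rightI[of 0 1]) (auto intro: quotient_le)
  then have "ereal d \<le> ereal (b - a)"
    using deriv unfolding has_dir_deriv_def
    by (intro tendsto_le[OF trivial_limit_at_right_real tendsto_const])
  then show ?thesis
    by simp
qed

lemma in_Lambda_sum_FPhi_pt_le:
  assumes Lam: "in_Lambda Phi" and "is_design w" "is_design v"
    and w: "Phi w = ereal a" and v: "Phi v \<le> ereal b"
  shows "(\<Sum>i\<in>UNIV. (v i - w i) * FPhi_pt Phi w i) \<le> b - a"
proof -
  have deriv: "has_dir_deriv Phi w u (\<Sum>i\<in>UNIV. u i * FPhi_pt Phi w i)" if "is_design u" for u
    using Lam \<open>is_design w\<close> w that by (simp add: in_Lambda_def)
  from deriv[OF \<open>is_design w\<close>] w have "(\<Sum>i\<in>UNIV. w i * FPhi_pt Phi w i) = 0"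
    by (rule has_dir_deriv_self_eq_0[where Phi = Phi and w = w])
  moreover from deriv[OF \<open>is_design v\<close>] w v have "(\<Sum>i\<in>UNIV. v i * FPhi_pt Phi w i) \<le> b - a"
  proof (rule has_dir_deriv_le_of_convex[where Phi = Phi and w = w and v = v])
    show "Phi (mix \<alpha> w v) \<le> ereal (1 - \<alpha>) * Phi w + ereal \<alpha> * Phi v"
      if "0 < \<alpha>" "\<alpha> < 1" for \<alpha>
      using Lam \<open>is_design w\<close> \<open>is_design v\<close> that by (simp add: in_Lambda_def)
  qed
  ultimately show ?thesis
    by (simp add: left_diff_distrib sum_subtractf)
qed

lemma bounded_design_pos:
  assumes "bounded_design n w"
  shows "0 < n"
proof (rule ccontr)
  assume "\<not> 0 < n"
  then have "w i \<le> 0" "0 \<le> w i" for i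
    using assms by (auto simp: bounded_design_def is_design_def)
  then have "w = (\<lambda>_. 0)"
    by (intro ext order_antisym)
  then have "(\<Sum>i\<in>UNIV. w i) = 0"
    by simp
  then show False
    using assms by (simp add: bounded_design_def is_design_def)
qed

lemma sum_bounded_design_level_sets:
  assumes "bounded_design n w"
  shows "(\<Sum>i\<in>UNIV. g i) = (\<Sum>i | w i = 0. g i)
    + (\<Sum>i | 0 < w i \<and> w i < 1 / real n. g i) + (\<Sum>i | w i = 1 / real n. g i)"
proof -
  let ?X1 = "{i. w i = 0}" and ?X2 = "{i. 0 < w i \<and> w i < 1 / real n}"
    and ?X3 = "{i. w i = 1 / real n}"
  have "0 < 1 / real n"
    using bounded_design_pos[OF assms] by simp
  have "0 \<le> w i" "w i \<le> 1 / real n" for i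
    using assms by (auto simp: bounded_design_def is_design_def)
  then have partition: "UNIV = ?X1 \<union> ?X2 \<union> ?X3"
    by (auto simp: less_le)
  have "sum g (?X1 \<union> ?X2 \<union> ?X3) = sum g (?X1 \<union> ?X2) + sum g ?X3"
    using \<open>0 < 1 / real n\<close> by (intro sum.union_disjoint) auto
  moreover have "sum g (?X1 \<union> ?X2) = sum g ?X1 + sum g ?X2"
    by (intro sum.union_disjoint) auto
  ultimately show ?thesis
    by (subst partition) simp
qed

lemma bounded_design_exchange_lower_bound:
  fixes F :: "'n::finite \<Rightarrow> real"
  assumes w: "bounded_design n w" and w0: "bounded_design n w0"
    and const: "\<forall>i. 0 < w i \<and> w i < 1 / real n \<longrightarrow> F i = c"
    and argmin: "\<forall>i. w i = 0 \<longrightarrow> F i1 \<le> F i"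
    and argmax: "\<forall>i. w i = 1 / real n \<longrightarrow> F i \<le> F i3"
  shows "(F i1 - c) * (\<Sum>i | w i = 0. w0 i) - (F i3 - c) * (\<Sum>i | w i = 1 / real n. w i - w0 i)
    \<le> (\<Sum>i\<in>UNIV. (w0 i - w i) * F i)"
proof -
  have w0_le: "w0 i \<le> 1 / real n" and w0_nonneg: "0 \<le> w0 i" for i
    using w0 by (auto simp: bounded_design_def is_design_def)
  have "(\<Sum>i\<in>UNIV. w0 i - w i) = 0"
    using w w0 by (simp add: bounded_design_def is_design_def sum_subtractf)
  then have "(\<Sum>i\<in>UNIV. (w0 i - w i) * F i) = (\<Sum>i\<in>UNIV. (w0 i - w i) * (F i - c))"
    by (simp add: right_diff_distrib sum_subtractf sum_distrib_right[symmetric])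
  also have "\<dots> = (\<Sum>i | w i = 0. w0 i * (F i - c)) + (\<Sum>i | w i = 1 / real n. (w0 i - w i) * (F i - c))"
    using const by (simp add: sum_bounded_design_level_sets[OF w])
  finally have centred: "(\<Sum>i\<in>UNIV. (w0 i - w i) * F i) =
    (\<Sum>i | w i = 0. w0 i * (F i - c)) + (\<Sum>i | w i = 1 / real n. (w0 i - w i) * (F i - c))" .
  have "(F i1 - c) * (\<Sum>i | w i = 0. w0 i) = (\<Sum>i | w i = 0. w0 i * (F i1 - c))"
    by (simp add: sum_distrib_left mult.commute)
  also have "\<dots> \<le> (\<Sum>i | w i = 0. w0 i * (F i - c))"
    using argmin w0_nonneg by (intro sum_mono mult_left_mono) auto
  finally have lower: "(F i1 - c) * (\<Sum>i | w i = 0. w0 i) \<le> (\<Sum>i | w i = 0. w0 i * (F i - c))" .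
  have neg: "- x * (\<Sum>i\<in>A. w i - w0 i) = (\<Sum>i\<in>A. w0 i - w i) * x" for x and A :: "'n set"
    by (simp add: sum_subtractf algebra_simps)
  have "- (F i3 - c) * (\<Sum>i | w i = 1 / real n. w i - w0 i)
      = (\<Sum>i | w i = 1 / real n. w0 i - w i) * (F i3 - c)"
    by (rule neg)
  also have "\<dots> = (\<Sum>i | w i = 1 / real n. (w0 i - w i) * (F i3 - c))"
    by (rule sum_distrib_right)
  also have "\<dots> \<le> (\<Sum>i | w i = 1 / real n. (w0 i - w i) * (F i - c))"
    using argmax w0_le by (intro sum_mono mult_left_mono_neg) auto
  finally show ?thesis
    using centred lower by linarith
qed

lemma bounded_design_level_set_weights:
  assumes w: "bounded_design n w" and w0: "bounded_design n w0"
  shows "0 \<le> (\<Sum>i | w i = 0. w0 i)" "(\<Sum>i | w i = 0. w0 i) \<le> 1"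
    and "0 \<le> (\<Sum>i | w i = 1 / real n. w i - w0 i)" "(\<Sum>i | w i = 1 / real n. w i - w0 i) \<le> 1"
proof -
  have w0_props: "\<And>i. 0 \<le> w0 i" "\<And>i. w0 i \<le> 1 / real n" "(\<Sum>i\<in>UNIV. w0 i) = 1"
    and w_props: "\<And>i. 0 \<le> w i" "(\<Sum>i\<in>UNIV. w i) = 1"
    using w w0 by (auto simp: bounded_design_def is_design_def)
  show "0 \<le> (\<Sum>i | w i = 0. w0 i)"
    using w0_props by (simp add: sum_nonneg)
  show "(\<Sum>i | w i = 0. w0 i) \<le> 1"
    using sum_mono2[of UNIV "{i. w i = 0}" w0] w0_props by simp
  show "0 \<le> (\<Sum>i | w i = 1 / real n. w i - w0 i)"
    using w0_props by (simp add: sum_nonneg)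
  have "(\<Sum>i | w i = 1 / real n. w i - w0 i) \<le> (\<Sum>i | w i = 1 / real n. w i)"
    using w0_props by (intro sum_mono) auto
  also have "\<dots> \<le> 1"
    using sum_mono2[of UNIV "{i. w i = 1 / real n}" w] w_props by simp
  finally show "(\<Sum>i | w i = 1 / real n. w i - w0 i) \<le> 1" .
qed

lemma min_0_le_mult_unit_interval:
  fixes x p :: real
  assumes "0 \<le> p" "p \<le> 1"
  shows "min x 0 \<le> x * p"
  using assms mult_left_le[of p x] mult_nonneg_nonneg[of x p]
  by (cases "0 \<le> x") (auto simp: min_def mult_le_cancel_left1 mult_nonpos_nonneg)

lemma mass_exchange_cases:
  fixes x y P R \<delta> :: real
  assumes P: "0 \<le> P" "P \<le> 1" and R: "0 \<le> R" "R \<le> 1" and "0 < \<delta>"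
    and le: "x * P - y * R \<le> - \<delta>"
  shows "x \<le> - \<delta> / 2 \<or> \<delta> / 2 \<le> y"
    and "y * R = 0 \<Longrightarrow> P \<noteq> 0 \<and> x \<le> - \<delta>"
    and "x * P = 0 \<Longrightarrow> R \<noteq> 0 \<and> \<delta> \<le> y"
proof -
  have "min x 0 \<le> x * P" and "min (- y) 0 \<le> - y * R"
    using P R by (simp_all only: min_0_le_mult_unit_interval)
  then show "x \<le> - \<delta> / 2 \<or> \<delta> / 2 \<le> y"
    using le \<open>0 < \<delta>\<close> by (auto simp: min_def split: if_splits)
  show "P \<noteq> 0 \<and> x \<le> - \<delta>" if "y * R = 0"
    using \<open>min x 0 \<le> x * P\<close> le that \<open>0 < \<delta>\<close> by (auto simp: min_def split: if_splits)
  show "R \<noteq> 0 \<and> \<delta> \<le> y" if "x * P = 0"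
    using \<open>min (- y) 0 \<le> - y * R\<close> le that \<open>0 < \<delta>\<close> by (auto simp: min_def split: if_splits)
qed

theorem lemma2:
  fixes Phi :: "('n::finite \<Rightarrow> real) \<Rightarrow> ereal"
    and I :: "'n \<Rightarrow> real^'p^'p" and phi :: "real^'p^'p \<Rightarrow> ereal"
    and n :: nat and w w0 :: "'n \<Rightarrow> real" and s \<delta> :: real and i1 i3 :: 'n
  defines "X1 \<equiv> {i. w i = 0}"
    and "X2 \<equiv> {i. 0 < w i \<and> w i < 1 / real n}"
    and "X3 \<equiv> {i. w i = 1 / real n}"
  assumes crit: "criterion_of Phi I phi"
    and Lam: "in_Lambda Phi"
    and nN: "n < CARD('n)"
    and xi: "bounded_design n w"
    and fin: "Phi w < \<infinity>"
    and common: "X2 \<noteq> {} \<Longrightarrow> \<forall>i\<in>X2. FPhi_pt Phi w i = s"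
    and argmin: "X1 \<noteq> {} \<Longrightarrow> i1 \<in> X1 \<and> (\<forall>j\<in>X1. FPhi_pt Phi w i1 \<le> FPhi_pt Phi w j)"
    and argmax: "X3 \<noteq> {} \<Longrightarrow> i3 \<in> X3 \<and> (\<forall>j\<in>X3. FPhi_pt Phi w j \<le> FPhi_pt Phi w i3)"
    and xi0: "bounded_design n w0"
    and dpos: "\<delta> > 0"
    and gap: "Phi w - Phi w0 > ereal \<delta>"
  shows "(X2 = {} \<longrightarrow> FPhi_pt Phi w i1 - FPhi_pt Phi w i3 \<le> - \<delta>)
       \<and> (X2 \<noteq> {} \<and> X1 = {} \<longrightarrow> X3 \<noteq> {} \<and> FPhi_pt Phi w i3 - s \<ge> \<delta>)
       \<and> (X2 \<noteq> {} \<and> X3 = {} \<longrightarrow> X1 \<noteq> {} \<and> FPhi_pt Phi w i1 - s \<le> - \<delta>)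
       \<and> (X1 \<noteq> {} \<and> X2 \<noteq> {} \<and> X3 \<noteq> {} \<longrightarrow>
            FPhi_pt Phi w i1 - s \<le> - \<delta> / 2 \<or> FPhi_pt Phi w i3 - s \<ge> \<delta> / 2)"
proof -
  txt \<open>\<open>crit\<close> is needed to exclude \<open>Phi w = -\<infinity>\<close>: in \<open>ereal\<close>, \<open>-\<infinity> - -\<infinity> = \<infinity>\<close>, so \<open>gap\<close> alone
    does not.\<close>
  obtain a where a: "Phi w = ereal a"
    using fin crit by (cases "Phi w") (auto simp: criterion_of_def)
  have "Phi w0 \<le> ereal (a - \<delta>)"
    using gap a by (cases "Phi w0") auto
  then have key: "(\<Sum>i\<in>UNIV. (w0 i - w i) * FPhi_pt Phi w i) \<le> - \<delta>"
    using in_Lambda_sum_FPhi_pt_le[OF Lam _ _ a] xi xi0 by (force simp: bounded_design_def)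
  define P where "P = (\<Sum>i\<in>X1. w0 i)"
  define R where "R = (\<Sum>i\<in>X3. w i - w0 i)"
  have weights: "0 \<le> P" "P \<le> 1" "0 \<le> R" "R \<le> 1"
    using bounded_design_level_set_weights[OF xi xi0] by (simp_all add: P_def R_def X1_def X3_def)
  have "(FPhi_pt Phi w i1 - c) * P - (FPhi_pt Phi w i3 - c) * R \<le> - \<delta>"
    if "\<forall>i\<in>X2. FPhi_pt Phi w i = c" for c
    using bounded_design_exchange_lower_bound[OF xi xi0, of "FPhi_pt Phi w" c i1 i3] that key
      argmin argmax
    by (force simp: P_def R_def X1_def X2_def X3_def)
  note exchange_cases = mass_exchange_cases[OF weights dpos this]
  show ?thesis
  proof (intro conjI impI)
    show "FPhi_pt Phi w i1 - FPhi_pt Phi w i3 \<le> - \<delta>" if "X2 = {}"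
      using exchange_cases(2)[of "FPhi_pt Phi w i3"] that by simp
    show "X3 \<noteq> {}" "\<delta> \<le> FPhi_pt Phi w i3 - s" if "X2 \<noteq> {} \<and> X1 = {}"
      using exchange_cases(3)[of s] common that by (auto simp: P_def R_def)
    show "X1 \<noteq> {}" "FPhi_pt Phi w i1 - s \<le> - \<delta>" if "X2 \<noteq> {} \<and> X3 = {}"
      using exchange_cases(2)[of s] common that by (auto simp: P_def R_def)
    show "FPhi_pt Phi w i1 - s \<le> - \<delta> / 2 \<or> \<delta> / 2 \<le> FPhi_pt Phi w i3 - s"
      if "X1 \<noteq> {} \<and> X2 \<noteq> {} \<and> X3 \<noteq> {}"
      using exchange_cases(1)[of s] common that by simp
  qed
qed

end
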